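(* Let $v\ge4$ be an integer with $v\not\equiv 2\pmod 4$. Then an optimum $(d,2)$-CDA$((d+1)v^2;6,v)$ exists for every positive integer $d$ with $d+1\le v$.
   Context: Consecutive $t$-way interaction in an $N\times k$ array $A=(a_{ij})$ over a $v$-set $V$: $T=\{(i,x_i),\dots,(i+t-1,x_{i+t-1})\}$, $1\le i\le k-t+1$, $x_r\in V$; $\rho(A,T)=\{r: a_{r,j}=x_j\ \forall (j,x_j)\in T\}$, $\rho(A,\mathcal T)=\bigcup_{T\in\mathcal T}\rho(A,T)$. A $(d,t)$-CDA$(N;k,v)$ is an $N\times k$ array over $V$ in which every $t$ consecutive columns contain every $t$-tuple at least once, and such that for every set $\mathcal T$ of exactly $d$ distinct consecutive $t$-way interactions and every consecutive $t$-way interaction $T$: $\rho(A,T)\subseteq\rho(A,\mathcal T)$ iff $T\in\mathcal T$. It is optimum if $N=(d+1)v^t$. *)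

theory Defs
  imports Main
begin

text \<open>An N x k array over the v-set {0..<v} is a function A :: nat => nat => nat,
  rows 0..<N, columns 0..<k (0-indexed).\<close>

definition cons_interactions :: "nat \<Rightarrow> nat \<Rightarrow> nat \<Rightarrow> (nat \<times> nat) set set" where
  "cons_interactions t k v =
     {T. \<exists>i x. i + t \<le> k \<and> (\<forall>j<t. x j < v) \<and> T = (\<lambda>j. (i + j, x j)) ` {..<t}}"

definition rho :: "nat \<Rightarrow> (nat \<Rightarrow> nat \<Rightarrow> nat) \<Rightarrow> (nat \<times> nat) set \<Rightarrow> nat set" where
  "rho N A T = {r. r < N \<and> (\<forall>(j, x)\<in>T. A r j = x)}"

definition rho_set :: "nat \<Rightarrow> (nat \<Rightarrow> nat \<Rightarrow> nat) \<Rightarrow> (nat \<times> nat) set set \<Rightarrow> nat set" where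
  "rho_set N A TT = (\<Union>T\<in>TT. rho N A T)"

definition is_CDA :: "nat \<Rightarrow> nat \<Rightarrow> nat \<Rightarrow> nat \<Rightarrow> nat \<Rightarrow> (nat \<Rightarrow> nat \<Rightarrow> nat) \<Rightarrow> bool" where
  "is_CDA d t N k v A \<longleftrightarrow>
     (\<forall>r<N. \<forall>c<k. A r c < v) \<and>
     (\<forall>i x. i + t \<le> k \<longrightarrow> (\<forall>j<t. x j < v) \<longrightarrow> (\<exists>r<N. \<forall>j<t. A r (i + j) = x j)) \<and>
     (\<forall>TT T. TT \<subseteq> cons_interactions t k v \<longrightarrow> finite TT \<longrightarrow> card TT = d \<longrightarrow>
        T \<in> cons_interactions t k v \<longrightarrow>
        (rho N A T \<subseteq> rho_set N A TT \<longleftrightarrow> T \<in> TT))"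

definition is_optimum_CDA :: "nat \<Rightarrow> nat \<Rightarrow> nat \<Rightarrow> nat \<Rightarrow> nat \<Rightarrow> (nat \<Rightarrow> nat \<Rightarrow> nat) \<Rightarrow> bool" where
  "is_optimum_CDA d t N k v A \<longleftrightarrow> is_CDA d t N k v A \<and> N = (d + 1) * v ^ t"

end

theory Submission
  imports Defs
begin

text \<open>
  Index the rows by triples (c, a, b) with c \<le> d and a, b < v, and give them the six columns
  a, b, a + c, b + c, a + 2c, b + c - \<tau>(c) modulo v, where the permutation \<tau> = twist v
  of {0..<v} fixes every c < v div 2.
  For fixed c each pair of adjacent columns is a bijective function of (a, b) modulo v, so every
  consecutive interaction occurs in d + 1 rows. Any two different pairs of adjacent columns
  determine the row, so distinct interactions share at most one row, and d interactions cannot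
  cover the d + 1 rows of another one. The only delicate case is columns 0, 1, 4, 5: they fix
  only 2c modulo v, which for even v cannot tell c from c + v/2, and \<tau> is chosen to separate
  these two.
\<close>

lemma eq_of_dvd_diff:
  fixes x y v :: nat
  assumes "x < v" "y < v" "int v dvd int x - int y"
  shows "x = y"
proof (rule ccontr)
  assume "x \<noteq> y"
  then have "\<bar>int v\<bar> \<le> \<bar>int x - int y\<bar>"
    using assms(3) by (intro dvd_imp_le_int) auto
  then show False
    using assms(1,2) by linarith
qed

lemma ex_residue: "0 < v \<Longrightarrow> \<exists>a<v. int v dvd int a - z"
  by (rule exI[of _ "nat (z mod int v)"]) (simp add: nat_less_iff mod_eq_dvd_iff[symmetric])

lemma finite_rho: "finite (rho N A T)"
  by (rule finite_subset[of _ "{..<N}"]) (auto simp: rho_def)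

lemma is_CDA_if_large_and_almost_disjoint:
  assumes entries: "\<And>r c. r < N \<Longrightarrow> c < k \<Longrightarrow> A r c < v"
    and large: "\<And>T. T \<in> cons_interactions t k v \<Longrightarrow> d < card (rho N A T)"
    and almost_disjoint: "\<And>T T'. T \<in> cons_interactions t k v \<Longrightarrow> T' \<in> cons_interactions t k v \<Longrightarrow>
      T \<noteq> T' \<Longrightarrow> card (rho N A T \<inter> rho N A T') \<le> 1"
  shows "is_CDA d t N k v A"
proof -
  have covered: "\<exists>r<N. \<forall>j<t. A r (i + j) = x j" if "i + t \<le> k" "\<forall>j<t. x j < v" for i x
  proof -
    let ?T = "(\<lambda>j. (i + j, x j)) ` {..<t}"
    have "?T \<in> cons_interactions t k v"
      unfolding cons_interactions_def using that by (intro CollectI exI conjI) simp_all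
    then have "rho N A ?T \<noteq> {}"
      using large by (metis card.empty not_less0)
    then show ?thesis
      by (auto simp: rho_def)
  qed
  have detecting: "rho N A T \<subseteq> rho_set N A TT \<longleftrightarrow> T \<in> TT"
    if TT: "TT \<subseteq> cons_interactions t k v" "finite TT" "card TT = d"
      and T: "T \<in> cons_interactions t k v" for TT T
  proof
    assume covered_by_TT: "rho N A T \<subseteq> rho_set N A TT"
    show "T \<in> TT"
    proof (rule ccontr)
      assume "T \<notin> TT"
      have "rho N A T = (\<Union>T'\<in>TT. rho N A T \<inter> rho N A T')"
        using covered_by_TT by (auto simp: rho_set_def)
      then have "card (rho N A T) \<le> (\<Sum>T'\<in>TT. card (rho N A T \<inter> rho N A T'))"
        using card_UN_le[OF TT(2)] by metis
      also have "\<dots> \<le> (\<Sum>T'\<in>TT. 1)"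
        using almost_disjoint[OF T] TT(1) \<open>T \<notin> TT\<close> by (intro sum_mono) blast
      finally show False
        using large[OF T] TT by simp
    qed
  qed (auto simp: rho_set_def)
  show ?thesis
    by (simp add: is_CDA_def entries covered detecting)
qed

lemma cons_interactions_2_iff:
  "T \<in> cons_interactions 2 k v \<longleftrightarrow>
     (\<exists>i x y. i + 2 \<le> k \<and> x < v \<and> y < v \<and> T = {(i, x), (Suc i, y)})"
proof
  assume "T \<in> cons_interactions 2 k v"
  then obtain i x where "i + 2 \<le> k" "\<forall>j<2. x j < v" "T = (\<lambda>j. (i + j, x j)) ` {..<2}"
    by (auto simp: cons_interactions_def)
  moreover have "{..<2::nat} = {0, 1}"
    by auto
  ultimately have "i + 2 \<le> k \<and> x 0 < v \<and> x 1 < v \<and> T = {(i, x 0), (Suc i, x 1)}"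
    by simp
  then show "\<exists>i x y. i + 2 \<le> k \<and> x < v \<and> y < v \<and> T = {(i, x), (Suc i, y)}"
    by blast
next
  assume "\<exists>i x y. i + 2 \<le> k \<and> x < v \<and> y < v \<and> T = {(i, x), (Suc i, y)}"
  then obtain i x y where "i + 2 \<le> k" "x < v" "y < v" "T = {(i, x), (Suc i, y)}"
    by blast
  moreover define f where "f j = (if j = 0 then x else y)" for j :: nat
  moreover have "{..<2::nat} = {0, 1}"
    by auto
  ultimately have "T = (\<lambda>j. (i + j, f j)) ` {..<2}" "\<forall>j<2. f j < v" "i + 2 \<le> k"
    by auto
  then show "T \<in> cons_interactions 2 k v"
    unfolding cons_interactions_def by (intro CollectI exI conjI)
qed

lemma rho_pair: "rho N A {(i, x), (Suc i, y)} = {r. r < N \<and> A r i = x \<and> A r (Suc i) = y}"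
  by (auto simp: rho_def)

lemma is_CDA_2_if_large_and_separating:
  assumes entries: "\<And>r c. r < N \<Longrightarrow> c < k \<Longrightarrow> A r c < v"
    and large: "\<And>i x y. i + 2 \<le> k \<Longrightarrow> x < v \<Longrightarrow> y < v \<Longrightarrow>
      d < card {r. r < N \<and> A r i = x \<and> A r (Suc i) = y}"
    and separating: "\<And>i j r s. i < j \<Longrightarrow> j + 2 \<le> k \<Longrightarrow> r < N \<Longrightarrow> s < N \<Longrightarrow>
      A r i = A s i \<Longrightarrow> A r (Suc i) = A s (Suc i) \<Longrightarrow>
      A r j = A s j \<Longrightarrow> A r (Suc j) = A s (Suc j) \<Longrightarrow> r = s"
  shows "is_CDA d 2 N k v A"
proof (rule is_CDA_if_large_and_almost_disjoint[OF entries])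
  fix T assume "T \<in> cons_interactions 2 k v"
  then obtain i x y where "i + 2 \<le> k" "x < v" "y < v" "T = {(i, x), (Suc i, y)}"
    by (auto simp: cons_interactions_2_iff)
  then show "d < card (rho N A T)"
    using large by (simp add: rho_pair)
next
  fix T T' assume T: "T \<in> cons_interactions 2 k v" and T': "T' \<in> cons_interactions 2 k v"
    and "T \<noteq> T'"
  obtain i x y where i: "i + 2 \<le> k" and T_eq: "T = {(i, x), (Suc i, y)}"
    using T by (auto simp: cons_interactions_2_iff)
  obtain i' x' y' where i': "i' + 2 \<le> k" and T'_eq: "T' = {(i', x'), (Suc i', y')}"
    using T' by (auto simp: cons_interactions_2_iff)
  have "r = s" if "r \<in> rho N A T \<inter> rho N A T'" "s \<in> rho N A T \<inter> rho N A T'" for r s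
  proof -
    have rows: "r < N" "s < N" "A r i = A s i" "A r (Suc i) = A s (Suc i)"
        "A r i' = A s i'" "A r (Suc i') = A s (Suc i')"
      using that by (auto simp: T_eq T'_eq rho_pair)
    consider "i = i'" | "i < i'" | "i' < i"
      by linarith
    then show ?thesis
    proof cases
      case 1
      then show ?thesis
        using that \<open>T \<noteq> T'\<close> by (auto simp: T_eq T'_eq rho_pair)
    next
      case 2
      then show ?thesis
        using separating[OF 2 i' rows(1,2)] rows(3-6) by blast
    next
      case 3
      then show ?thesis
        using separating[OF 3 i rows(1,2)] rows(3-6) by blast
    qed
  qed
  then show "card (rho N A T \<inter> rho N A T') \<le> 1"
    by (simp add: card_le_Suc0_iff_eq finite_rho)
qed

definition block_row :: "nat \<Rightarrow> nat \<Rightarrow> nat \<Rightarrow> nat \<Rightarrow> nat" where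
  "block_row v c a b = (c * v + a) * v + b"

definition block_array :: "nat \<Rightarrow> (nat \<Rightarrow> nat \<Rightarrow> nat \<Rightarrow> nat \<Rightarrow> int) \<Rightarrow> nat \<Rightarrow> nat \<Rightarrow> nat" where
  "block_array v L r j = nat (L (r div v div v) (r div v mod v) (r mod v) j mod int v)"

lemma block_array_block_row:
  assumes "a < v" "b < v"
  shows "block_array v L (block_row v c a b) j = nat (L c a b j mod int v)"
  using assms by (simp add: block_array_def block_row_def)

lemma block_row_div:
  assumes "a < v" "b < v"
  shows "block_row v c a b div v ^ 2 = c"
  using assms by (simp add: block_row_def power2_eq_square div_mult2_eq)

lemma block_row_less_iff:
  assumes "a < v" "b < v"
  shows "block_row v c a b < m * v ^ 2 \<longleftrightarrow> c < m"
proof -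
  have "0 < v ^ 2"
    using assms by simp
  then show ?thesis
    using div_less_iff_less_mult[of "v ^ 2" "block_row v c a b" m] block_row_div[OF assms] by simp
qed

lemma block_row_cases:
  assumes "r < m * v ^ 2"
  obtains c a b where "c < m" "a < v" "b < v" "r = block_row v c a b"
proof -
  have "0 < v"
    using assms by (cases "v = 0") auto
  have "r = block_row v (r div v div v) (r div v mod v) (r mod v)"
    unfolding block_row_def by simp
  moreover have "r div v mod v < v" "r mod v < v"
    using \<open>0 < v\<close> by simp_all
  ultimately show thesis
    using that assms block_row_less_iff by metis
qed

lemma block_array_less: "0 < v \<Longrightarrow> block_array v L r j < v"
  by (simp add: block_array_def nat_less_iff)

lemma block_array_eq_iff:
  assumes "a < v" "b < v" "a' < v" "b' < v"
  shows "block_array v L (block_row v c a b) j = block_array v L (block_row v c' a' b') j \<longleftrightarrow>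
    int v dvd L c a b j - L c' a' b' j"
  using assms
  by (simp add: block_array_block_row nat_eq_iff2 flip: mod_eq_dvd_iff) (rule eq_commute)

lemma is_CDA_block_array:
  fixes L :: "nat \<Rightarrow> nat \<Rightarrow> nat \<Rightarrow> nat \<Rightarrow> int"
  assumes "0 < v"
    and onto: "\<And>c i x y. c \<le> d \<Longrightarrow> i + 2 \<le> k \<Longrightarrow>
      \<exists>a<v. \<exists>b<v. int v dvd L c a b i - x \<and> int v dvd L c a b (Suc i) - y"
    and separating: "\<And>i j c a b c' a' b'. i < j \<Longrightarrow> j + 2 \<le> k \<Longrightarrow> c \<le> d \<Longrightarrow> c' \<le> d \<Longrightarrow>
      a < v \<Longrightarrow> b < v \<Longrightarrow> a' < v \<Longrightarrow> b' < v \<Longrightarrow>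
      (\<forall>l\<in>{i, Suc i, j, Suc j}. int v dvd L c a b l - L c' a' b' l) \<Longrightarrow> c = c' \<and> a = a' \<and> b = b'"
  shows "is_CDA d 2 ((d + 1) * v ^ 2) k v (block_array v L)"
proof (rule is_CDA_2_if_large_and_separating)
  show "block_array v L r c < v" for r c
    using \<open>0 < v\<close> by (rule block_array_less)
next
  let ?N = "(d + 1) * v ^ 2"
  fix i x y assume i: "i + 2 \<le> k" and "x < v" "y < v"
  let ?R = "{r. r < ?N \<and> block_array v L r i = x \<and> block_array v L r (Suc i) = y}"
  have "\<forall>c. \<exists>a b. c \<le> d \<longrightarrow> a < v \<and> b < v \<and>
      int v dvd L c a b i - int x \<and> int v dvd L c a b (Suc i) - int y"
    using onto[OF _ i] by blast
  then obtain a b where ab: "\<And>c. c \<le> d \<Longrightarrow> a c < v \<and> b c < v \<and>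
      int v dvd L c (a c) (b c) i - int x \<and> int v dvd L c (a c) (b c) (Suc i) - int y"
    by metis
  have hits: "block_row v c (a c) (b c) \<in> ?R" if "c \<le> d" for c
  proof -
    have reduce: "L c (a c) (b c) l mod int v = int z"
      if "int v dvd L c (a c) (b c) l - int z" "z < v" for l z
      using that by (simp add: mod_eq_dvd_iff[symmetric])
    have "block_row v c (a c) (b c) < ?N"
      using ab[OF that] that by (simp only: block_row_less_iff)
    moreover have "L c (a c) (b c) i mod int v = int x" "L c (a c) (b c) (Suc i) mod int v = int y"
      using ab[OF that] reduce \<open>x < v\<close> \<open>y < v\<close> by blast+
    ultimately show ?thesis
      using ab[OF that] by (simp add: block_array_block_row)
  qed
  have "inj_on (\<lambda>c. block_row v c (a c) (b c)) {..d}"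
    by (rule inj_on_inverseI[of _ "\<lambda>r. r div v ^ 2"]) (simp add: ab block_row_div)
  then have "card {..d} \<le> card ?R"
    using hits by (intro card_inj_on_le) (auto intro: finite_subset[of _ "{..<?N}"])
  then show "d < card ?R"
    by simp
next
  fix i j r s
  assume ij: "i < j" "j + 2 \<le> k" and rs: "r < (d + 1) * v ^ 2" "s < (d + 1) * v ^ 2"
    and eq: "block_array v L r i = block_array v L s i"
      "block_array v L r (Suc i) = block_array v L s (Suc i)"
      "block_array v L r j = block_array v L s j"
      "block_array v L r (Suc j) = block_array v L s (Suc j)"
  obtain c a b where r: "c < d + 1" "a < v" "b < v" "r = block_row v c a b"
    using rs(1) by (rule block_row_cases)
  obtain c' a' b' where s: "c' < d + 1" "a' < v" "b' < v" "s = block_row v c' a' b'"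
    using rs(2) by (rule block_row_cases)
  have "\<forall>l\<in>{i, Suc i, j, Suc j}. int v dvd L c a b l - L c' a' b' l"
    using eq r s by (simp add: block_array_eq_iff)
  then show "r = s"
    using separating[OF ij, of c c' a b a' b'] r s by simp
qed

definition twist :: "nat \<Rightarrow> nat \<Rightarrow> nat" where
  "twist v c = (if c < v div 2 then c else if c = v - 1 then v div 2 else c + 1)"

lemma twist_less: "c < v \<Longrightarrow> twist v c < v"
  by (auto simp: twist_def)

lemma twist_inj: "c < v \<Longrightarrow> c' < v \<Longrightarrow> twist v c = twist v c' \<Longrightarrow> c = c'"
  by (auto simp: twist_def split: if_splits)

lemma twist_shift_half:
  assumes "v = 2 * n" "2 \<le> n" "c < n" "c' = c + n"
  shows "\<not> int v dvd (int c' - int c) - (int (twist v c') - int (twist v c))"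
    (is "\<not> int v dvd ?x")
proof -
  have "twist v c = c"
    using assms by (simp add: twist_def)
  then have "?x = int n - 1 \<or> ?x = -1"
    using assms by (cases "c' = v - 1") (auto simp: twist_def)
  moreover have "\<not> int v dvd int n - 1"
  proof
    assume "int v dvd int n - 1"
    moreover have "int (n - 1) - int 0 = int n - 1"
      using assms by simp
    ultimately have "int v dvd int (n - 1) - int 0"
      by (simp only:)
    then have "n - 1 = 0"
      by (rule eq_of_dvd_diff[rotated 2]) (use assms in simp_all)
    then show False
      using assms by simp
  qed
  moreover have "\<not> int v dvd -1"
    using assms by simp
  ultimately show ?thesis
    by metis
qed

lemma twist_separates:
  assumes "v \<noteq> 2" "c < v" "c' < v"
    and "int v dvd 2 * (int c - int c')"
    and "int v dvd (int c - int c') - (int (twist v c) - int (twist v c'))"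
  shows "c = c'"
proof (rule ccontr)
  assume "c \<noteq> c'"
  have half: "\<not> int v dvd 2 * (int c2 - int c1) \<or>
      \<not> int v dvd (int c2 - int c1) - (int (twist v c2) - int (twist v c1))"
    if "c1 < c2" "c2 < v" for c1 c2
  proof (rule ccontr)
    assume "\<not> ?thesis"
    then obtain q where q: "2 * (int c2 - int c1) = int v * q"
      and twisted: "int v dvd (int c2 - int c1) - (int (twist v c2) - int (twist v c1))"
      by (auto elim: dvdE)
    have "0 < int v * q" "int v * q < int v * 2"
      unfolding q[symmetric] using that by simp_all
    then have "q = 1"
      by (simp add: zero_less_mult_iff)
    then have "int v = 2 * (int c2 - int c1)"
      using q by simp
    then have "v = 2 * (c2 - c1)"
      using that by presburger
    moreover have "2 \<le> c2 - c1" "c1 < c2 - c1" "c2 = c1 + (c2 - c1)"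
      using calculation that assms(1) by linarith+
    ultimately show False
      using twist_shift_half twisted by metis
  qed
  consider "c < c'" | "c' < c"
    using \<open>c \<noteq> c'\<close> by linarith
  then show False
  proof cases
    case 1
    have "int v dvd 2 * (int c' - int c)"
      using dvd_minus_iff[THEN iffD2, OF assms(4)] by (simp add: algebra_simps)
    moreover have "int v dvd (int c' - int c) - (int (twist v c') - int (twist v c))"
      using dvd_minus_iff[THEN iffD2, OF assms(5)] by (simp add: algebra_simps)
    ultimately show False
      using half[OF 1 assms(3)] by blast
  next
    case 2
    then show False
      using half[OF 2 assms(2)] assms(4,5) by blast
  qed
qed

definition cda_columns :: "nat \<Rightarrow> nat \<Rightarrow> nat \<Rightarrow> nat \<Rightarrow> nat \<Rightarrow> int" where
  "cda_columns v c a b = (!) [int a, int b, int a + int c, int b + int c, int a + 2 * int c,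
     int b + int c - int (twist v c)]"

lemma cda_columns_onto:
  assumes "0 < v" "i \<le> 4"
  shows "\<exists>a<v. \<exists>b<v.
    int v dvd cda_columns v c a b i - x \<and> int v dvd cda_columns v c a b (Suc i) - y"
proof -
  have res: "\<exists>a<v. int v dvd int a - z" for z
    using assms(1) by (rule ex_residue)
  consider "i = 0" | "i = 1" | "i = 2" | "i = 3" | "i = 4"
    using assms(2) by linarith
  then show ?thesis
  proof cases
    case 1
    obtain a b where "a < v" "int v dvd int a - x" "b < v" "int v dvd int b - y"
      using res by blast
    then show ?thesis
      using 1 by (auto simp: cda_columns_def)
  next
    case 2
    obtain a b where "a < v" "int v dvd int a - (y - int c)" "b < v" "int v dvd int b - x"
      using res by blast
    then show ?thesis
      using 2 by (auto simp: cda_columns_def algebra_simps)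
  next
    case 3
    obtain a b where "a < v" "int v dvd int a - (x - int c)" "b < v" "int v dvd int b - (y - int c)"
      using res by blast
    then show ?thesis
      using 3 by (auto simp: cda_columns_def algebra_simps)
  next
    case 4
    obtain a b where "a < v" "int v dvd int a - (y - 2 * int c)"
        "b < v" "int v dvd int b - (x - int c)"
      using res by blast
    then show ?thesis
      using 4 by (auto simp: cda_columns_def algebra_simps)
  next
    case 5
    obtain a b where "a < v" "int v dvd int a - (x - 2 * int c)"
        "b < v" "int v dvd int b - (y - int c + int (twist v c))"
      using res by blast
    then show ?thesis
      using 5 by (auto simp: cda_columns_def algebra_simps)
  qed
qed

lemma column_pairs_cases:
  fixes i j :: nat
  assumes "i < j" "j \<le> 4"
  obtains "{0, 2} \<subseteq> {i, Suc i, j, Suc j}" | "{1, 3} \<subseteq> {i, Suc i, j, Suc j}"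
    | "{2, 4} \<subseteq> {i, Suc i, j, Suc j}" | "{3, 5} \<subseteq> {i, Suc i, j, Suc j}"
    | "{0, 1, 4, 5} \<subseteq> {i, Suc i, j, Suc j}"
proof -
  have "(i, j) \<in> {(0, 1), (0, 2), (0, 3), (1, 2), (1, 3), (1, 4), (2, 3), (2, 4), (3, 4), (0, 4)}"
    using assms by (simp; presburger)
  then show thesis
    by (elim insertE; simp) (rule that; simp)+
qed

lemma cda_columns_separating:
  assumes "v \<noteq> 2" "i < j" "j \<le> 4" "c < v" "a < v" "b < v" "c' < v" "a' < v" "b' < v"
    and agree: "\<forall>l\<in>{i, Suc i, j, Suc j}. int v dvd cda_columns v c a b l - cda_columns v c' a' b' l"
  shows "c = c' \<and> a = a' \<and> b = b'"
proof -
  let ?S = "{i, Suc i, j, Suc j}"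
  define D where "D l = cda_columns v c a b l - cda_columns v c' a' b' l" for l
  have D: "D 0 = int a - int a'" "D 1 = int b - int b'" "D 2 = D 0 + (int c - int c')"
      "D 3 = D 1 + (int c - int c')" "D 4 = D 2 + (int c - int c')"
      "D 5 = D 3 - (int (twist v c) - int (twist v c'))"
    by (simp_all add: D_def cda_columns_def numeral_eq_Suc)
  have dvd_D: "int v dvd D l" if "l \<in> ?S" for l
    using agree that unfolding D_def by blast
  have "c = c'"
  proof -
    have by_diff: "c = c'" if "int v dvd int c - int c'"
      using eq_of_dvd_diff[OF assms(4,7) that] .
    have by_twist: "c = c'" if "int v dvd int (twist v c) - int (twist v c')"
      using twist_inj[OF assms(4,7) eq_of_dvd_diff[OF twist_less twist_less that]] assms(4,7)
      by blast
    consider "{0, 2} \<subseteq> ?S" | "{1, 3} \<subseteq> ?S" | "{2, 4} \<subseteq> ?S" | "{3, 5} \<subseteq> ?S"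
      | "{0, 1, 4, 5} \<subseteq> ?S"
      using assms(2,3) by (rule column_pairs_cases)
    then show ?thesis
    proof cases
      case 1
      then have "int v dvd D 2 - D 0"
        by (simp add: dvd_D dvd_diff)
      then show ?thesis
        by (intro by_diff) (simp add: D)
    next
      case 2
      then have "int v dvd D 3 - D 1"
        by (simp add: dvd_D dvd_diff)
      then show ?thesis
        by (intro by_diff) (simp add: D)
    next
      case 3
      then have "int v dvd D 4 - D 2"
        by (simp add: dvd_D dvd_diff)
      then show ?thesis
        by (intro by_diff) (simp add: D)
    next
      case 4
      then have "int v dvd D 3 - D 5"
        by (simp add: dvd_D dvd_diff)
      then show ?thesis
        by (intro by_twist) (simp add: D)
    next
      case 5
      then have "int v dvd D 4 - D 0" "int v dvd D 5 - D 1"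
        by (simp_all add: dvd_D dvd_diff)
      then show ?thesis
        by (intro twist_separates[OF assms(1,4,7)]) (simp_all add: D algebra_simps)
    qed
  qed
  moreover have "int v dvd int a - int a' \<and> int v dvd int b - int b'"
  proof -
    consider "i = 0" | "i = 1" | "i = 2" | "i = 3"
      using assms(2,3) by linarith
    then show ?thesis
      using dvd_D[of i] dvd_D[of "i + 1"] \<open>c = c'\<close> by cases (simp_all add: D flip: One_nat_def)
  qed
  ultimately show ?thesis
    using eq_of_dvd_diff[OF assms(5,8)] eq_of_dvd_diff[OF assms(6,9)] by blast
qed

theorem mainTheorem12:
  fixes v d :: nat
  assumes "v \<ge> 4" and "v mod 4 \<noteq> 2" and "d \<ge> 1" and "d + 1 \<le> v"
  shows "\<exists>A. is_optimum_CDA d 2 ((d + 1) * v ^ 2) 6 v A"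
proof -
  have "0 < v" "v \<noteq> 2"
    using assms(1) by simp_all
  have "is_CDA d 2 ((d + 1) * v ^ 2) 6 v (block_array v (cda_columns v))"
  proof (rule is_CDA_block_array[OF \<open>0 < v\<close>])
    fix c i :: nat and x y :: int
    assume "i + 2 \<le> 6"
    then show "\<exists>a<v. \<exists>b<v. int v dvd cda_columns v c a b i - x \<and>
        int v dvd cda_columns v c a b (Suc i) - y"
      using cda_columns_onto[OF \<open>0 < v\<close>] by simp
  next
    fix i j c a b c' a' b' :: nat
    assume "i < j" "j + 2 \<le> 6" "c \<le> d" "c' \<le> d" "a < v" "b < v" "a' < v" "b' < v"
      "\<forall>l\<in>{i, Suc i, j, Suc j}. int v dvd cda_columns v c a b l - cda_columns v c' a' b' l"
    moreover have "c < v" "c' < v"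
      using \<open>c \<le> d\<close> \<open>c' \<le> d\<close> assms(4) by simp_all
    ultimately show "c = c' \<and> a = a' \<and> b = b'"
      using cda_columns_separating[OF \<open>v \<noteq> 2\<close>] by simp
  qed
  then show ?thesis
    unfolding is_optimum_CDA_def by blast
qed

end
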